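(* Let $\alpha>0$, $\beta\ge0$, $h>0$, and $V'(h)>0$. Set $b=\beta/h^2$. For $\theta\in(0,2\pi)$, consider the complex quadratic equation in $z$ $$z^2+z\big(\alpha-b(e^{i\theta}-1)\big)-\alpha V'(h)\,(e^{i\theta}-1)=0 .$$ If $\theta=\pi$, this equation has no purely imaginary root $z\in i\mathbb{R}$. If $\theta\neq\pi$, it has a purely imaginary root if and only if $$V'(h)=\frac{\alpha}{2\cos^2(\theta/2)}+b+2\tan^2(\theta/2)\, b\left(\frac{b}{\alpha}+1\right).$$
   Context: This quadratic is the characteristic equation obtained by substituting Fourier modes $y_n(t)=\exp(i\theta n+zt)$ into the linearization $$\ddot y_n=\alpha\big(V'(h)(y_{n+1}-y_n)-\dot y_n\big)+\frac{\beta}{h^2}(\dot y_{n+1}-\dot y_n)$$ of the single-lane model $$\dot x_n=v_n,\qquad \dot v_n=\alpha(V(x_{n+1}-x_n)-v_n)+\beta\frac{v_{n+1}-v_n}{(x_{n+1}-x_n)^2}$$ around the uniform flow with headway $h$. Here $V$ is a differentiable optimal velocity function. For a ring with $N$ vehicles, the admissible values are $\theta=a_k=2\pi k/N$. *)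

theory Defs
  imports Complex_Main
begin

text \<open>Characteristic quadratic of the linearised model at wave number theta,
  with V'(h) = Vp and b = beta / h^2.\<close>
definition char_poly :: "real \<Rightarrow> real \<Rightarrow> real \<Rightarrow> real \<Rightarrow> complex \<Rightarrow> complex" where
  "char_poly \<alpha> b Vp \<theta> z =
     z\<^sup>2 + z * (complex_of_real \<alpha> - complex_of_real b * (cis \<theta> - 1))
       - complex_of_real (\<alpha> * Vp) * (cis \<theta> - 1)"

end

theory Submission
  imports Defs
begin

text \<open>Write \<open>\<theta> = 2x\<close>, \<open>s = sin x\<close>, \<open>c = cos x\<close>, so \<open>1 - cos \<theta> = 2s\<^sup>2\<close> and \<open>sin \<theta> = 2sc\<close>.
  For \<open>z = i\<omega>\<close> the imaginary part of the quadratic is linear in \<open>\<omega>\<close>,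
  \<open>\<omega> D = 2\<alpha>V'sc\<close> with \<open>D = \<alpha> + 2bs\<^sup>2 > 0\<close>, so \<omega> is determined; substituting it into the
  real part and clearing \<open>D\<^sup>2\<close> leaves \<open>2\<alpha>V's\<^sup>2 (D\<^sup>2 + 2bc\<^sup>2D - 2\<alpha>V'c\<^sup>2) = 0\<close>.
  As \<open>s \<noteq> 0\<close>, an imaginary root exists iff \<open>2\<alpha>V'c\<^sup>2 = D (D + 2bc\<^sup>2) = D (\<alpha> + 2b)\<close>.
  For \<open>\<theta> = \<pi>\<close> we have \<open>c = 0\<close> and this says \<open>D = 0\<close>, which is impossible; otherwise
  dividing by \<open>2\<alpha>c\<^sup>2\<close> gives the stated formula for \<open>V'\<close>.\<close>

lemma char_poly_imaginary_eq_0_iff: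
  "char_poly \<alpha> b Vp \<theta> (\<i> * complex_of_real \<omega>) = 0 \<longleftrightarrow>
     -(\<omega>\<^sup>2) + \<omega> * b * sin \<theta> - \<alpha> * Vp * (cos \<theta> - 1) = 0 \<and>
     \<omega> * (\<alpha> - b * (cos \<theta> - 1)) = \<alpha> * Vp * sin \<theta>"
  unfolding char_poly_def
  by (simp add: complex_eq_iff cis.code power2_eq_square algebra_simps)

lemma char_poly_imaginary_root_iff:
  fixes \<alpha> b Vp x :: real
  defines "D \<equiv> \<alpha> + 2 * b * (sin x)\<^sup>2"
  assumes "D \<noteq> 0" and "\<alpha> * Vp * sin x \<noteq> 0"
  shows "(\<exists>\<omega>::real. char_poly \<alpha> b Vp (2 * x) (\<i> * complex_of_real \<omega>) = 0) \<longleftrightarrow>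
           2 * \<alpha> * Vp * (cos x)\<^sup>2 = D * (\<alpha> + 2 * b)"
proof -
  define s c where "s = sin x" and "c = cos x"
  define q where "q = 2 * \<alpha> * Vp * s * c"
  define P where "P \<omega> = -(\<omega>\<^sup>2) + \<omega> * b * (2 * s * c) + 2 * \<alpha> * Vp * s\<^sup>2" for \<omega>
  define E where "E = 2 * \<alpha> * Vp * c\<^sup>2 - D * (D + 2 * b * c\<^sup>2)"
  have "D + 2 * b * c\<^sup>2 = \<alpha> + 2 * b"
    using sin_cos_squared_add [of x] unfolding D_def s_def c_def by algebra
  have root_iff: "char_poly \<alpha> b Vp (2 * x) (\<i> * complex_of_real \<omega>) = 0 \<longleftrightarrow>
      P \<omega> = 0 \<and> \<omega> * D = q" for \<omega>
    unfolding char_poly_imaginary_eq_0_iff sin_double cos_double_sin D_def s_def c_def P_def q_def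
    by (auto simp: algebra_simps)
  have real_part_iff: "P \<omega> = 0 \<longleftrightarrow> E = 0" if "\<omega> * D = q" for \<omega>
  proof -
    have "D\<^sup>2 * P \<omega> = -((\<omega> * D)\<^sup>2) + (\<omega> * D) * b * (2 * s * c) * D + 2 * \<alpha> * Vp * s\<^sup>2 * D\<^sup>2"
      by (simp add: P_def algebra_simps power2_eq_square)
    also have "\<dots> = - 2 * \<alpha> * Vp * s\<^sup>2 * E"
      using that by (simp add: q_def E_def algebra_simps power2_eq_square)
    finally have "D\<^sup>2 * P \<omega> = - 2 * \<alpha> * Vp * s\<^sup>2 * E" .
    moreover have "- 2 * \<alpha> * Vp * s\<^sup>2 \<noteq> 0"
      using assms(3) by (simp add: s_def)
    ultimately show ?thesis
      using \<open>D \<noteq> 0\<close> by (metis mult_eq_0_iff power_not_zero)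
  qed
  have "(\<exists>\<omega>. P \<omega> = 0 \<and> \<omega> * D = q) \<longleftrightarrow> E = 0"
  proof
    show "E = 0 \<Longrightarrow> \<exists>\<omega>. P \<omega> = 0 \<and> \<omega> * D = q"
      using real_part_iff [of "q / D"] \<open>D \<noteq> 0\<close> by auto
  qed (use real_part_iff in blast)
  with \<open>D + 2 * b * c\<^sup>2 = \<alpha> + 2 * b\<close> show ?thesis
    by (simp add: root_iff E_def s_def c_def)
qed

lemma critical_speed_iff:
  fixes \<alpha> b Vp x :: real
  assumes "\<alpha> \<noteq> 0" and "cos x \<noteq> 0"
  shows "Vp = \<alpha> / (2 * (cos x)\<^sup>2) + b + 2 * (tan x)\<^sup>2 * b * (b / \<alpha> + 1) \<longleftrightarrow>
           2 * \<alpha> * Vp * (cos x)\<^sup>2 = (\<alpha> + 2 * b * (sin x)\<^sup>2) * (\<alpha> + 2 * b)"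
proof -
  have "\<alpha> / (2 * (cos x)\<^sup>2) + b + 2 * (tan x)\<^sup>2 * b * (b / \<alpha> + 1)
      = (\<alpha>\<^sup>2 + 2 * b * \<alpha> * (cos x)\<^sup>2 + 4 * (sin x)\<^sup>2 * b * (b + \<alpha>)) / (2 * \<alpha> * (cos x)\<^sup>2)"
    using assms by (simp add: tan_def power_divide field_simps power2_eq_square)
  also have "\<dots> = (\<alpha> + 2 * b * (sin x)\<^sup>2) * (\<alpha> + 2 * b) / (2 * \<alpha> * (cos x)\<^sup>2)"
    using sin_cos_squared_add [of x] by algebra
  finally have formula_eq: "\<alpha> / (2 * (cos x)\<^sup>2) + b + 2 * (tan x)\<^sup>2 * b * (b / \<alpha> + 1)
      = (\<alpha> + 2 * b * (sin x)\<^sup>2) * (\<alpha> + 2 * b) / (2 * \<alpha> * (cos x)\<^sup>2)" .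
  show ?thesis
    unfolding formula_eq using assms by (simp add: eq_divide_eq mult_ac)
qed

lemma cos_half_eq_0_iff:
  assumes "\<theta> \<in> {0<..<2 * pi}"
  shows "cos (\<theta> / 2) = 0 \<longleftrightarrow> \<theta> = pi"
  using assms cos_inj_pi [of "\<theta> / 2" "pi / 2"] by auto

theorem mainTheorem2:
  fixes V :: "real \<Rightarrow> real" and \<alpha> \<beta> h \<theta> Vp :: real
  assumes "\<alpha> > 0" and "\<beta> \<ge> 0" and "h > 0"
    and "(V has_real_derivative Vp) (at h)" and "Vp > 0"
    and "\<theta> \<in> {0<..<2 * pi}"
  defines "b \<equiv> \<beta> / h\<^sup>2"
  shows "(\<theta> = pi \<longrightarrow> \<not> (\<exists>\<omega>::real. char_poly \<alpha> b Vp \<theta> (\<i> * complex_of_real \<omega>) = 0))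
       \<and> (\<theta> \<noteq> pi \<longrightarrow>
           ((\<exists>\<omega>::real. char_poly \<alpha> b Vp \<theta> (\<i> * complex_of_real \<omega>) = 0)
            \<longleftrightarrow> Vp = \<alpha> / (2 * (cos (\<theta> / 2))\<^sup>2) + b
                             + 2 * (tan (\<theta> / 2))\<^sup>2 * b * (b / \<alpha> + 1)))"
proof -
  define x where "x = \<theta> / 2"
  have \<theta>: "\<theta> = 2 * x"
    by (simp add: x_def)
  have "b \<ge> 0"
    using assms(2) by (simp add: b_def)
  then have D_pos: "\<alpha> + 2 * b * (sin x)\<^sup>2 > 0"
    using assms(1) by (simp add: add_pos_nonneg)
  have "sin x > 0"
    using assms(6) by (simp add: x_def sin_gt_zero)
  then have "\<alpha> * Vp * sin x \<noteq> 0"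
    using assms(1,5) by simp
  then have root_iff: "(\<exists>\<omega>::real. char_poly \<alpha> b Vp \<theta> (\<i> * complex_of_real \<omega>) = 0) \<longleftrightarrow>
      2 * \<alpha> * Vp * (cos x)\<^sup>2 = (\<alpha> + 2 * b * (sin x)\<^sup>2) * (\<alpha> + 2 * b)"
    unfolding \<theta> using char_poly_imaginary_root_iff D_pos by simp
  show ?thesis
    unfolding x_def [symmetric]
  proof (intro conjI impI)
    assume "\<theta> = pi"
    then have "cos x = 0"
      using cos_half_eq_0_iff [OF assms(6)] by (simp add: x_def)
    then show "\<not> (\<exists>\<omega>::real. char_poly \<alpha> b Vp \<theta> (\<i> * complex_of_real \<omega>) = 0)"
      using root_iff D_pos \<open>b \<ge> 0\<close> assms(1) by simp
  next
    assume "\<theta> \<noteq> pi"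
    then have "cos x \<noteq> 0"
      using cos_half_eq_0_iff [OF assms(6)] by (simp add: x_def)
    then show "(\<exists>\<omega>::real. char_poly \<alpha> b Vp \<theta> (\<i> * complex_of_real \<omega>) = 0) \<longleftrightarrow>
        Vp = \<alpha> / (2 * (cos x)\<^sup>2) + b + 2 * (tan x)\<^sup>2 * b * (b / \<alpha> + 1)"
      using root_iff critical_speed_iff assms(1) by simp
  qed
qed

end
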